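(* Given $f\in\mathcal{N}_{2,\omega}$, we have $f\in\mathcal{N}_{3,\max(\omega,4d)}$ and $$R_3(f;\max(\omega,4d))\le\frac{4d}{3}+\frac43R_2(f;\omega).$$
   Context: Inputs lie in $\mathcal{X}_d=\mathbb{S}^{d-1}\times\mathbb{S}^{d-1}\subset\mathbb{R}^{2d}$. A depth-$L$ ReLU network is $f_{\phi}(\mathbf{x})=\mathbf{w}_L^\top[\mathbf{W}_{L-1}[\cdots[\mathbf{W}_1\mathbf{x}+\mathbf{b}_1]_+\cdots]_++\mathbf{b}_{L-1}]_++b_L$, with $\phi=(\mathbf{W}_1,\mathbf{b}_1,\dots,\mathbf{w}_L,b_L)$; $\mathcal{N}_{L,\omega}$ is the set of such functions with all hidden widths at most $\omega$; $\|\phi\|^2$ is the sum of squares of all weights and biases; $R_L(f;\omega)=\inf\{\|\phi\|^2/L:\ f_\phi=f\text{ on }\mathcal{X}_d,\ \text{all hidden widths}\le\omega\}$. *)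

theory Defs
  imports Complex_Main
begin

text \<open>Vectors are real lists, a matrix is the list of its rows.
A network phi = (Ls, w, c) consists of the hidden layers Ls = [(W_1,b_1),...,(W_{L-1},b_{L-1})],
the output weight vector w = w_L and the output bias c = b_L.\<close>

type_synonym layer = "real list list \<times> real list"
type_synonym net = "layer list \<times> real list \<times> real"

definition relu :: "real \<Rightarrow> real" where
  "relu t = max t 0"

definition matvec :: "real list list \<Rightarrow> real list \<Rightarrow> real list" where
  "matvec W x = map (\<lambda>row. sum_list (map2 (*) row x)) W"

definition apply_layer :: "layer \<Rightarrow> real list \<Rightarrow> real list" where
  "apply_layer l x = map relu (map2 (+) (matvec (fst l) x) (snd l))"

definition eval_net :: "net \<Rightarrow> real list \<Rightarrow> real" where
  "eval_net phi x =
     (case phi of (Ls, w, c) \<Rightarrow>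
        sum_list (map2 (*) w (foldl (\<lambda>v l. apply_layer l v) x Ls)) + c)"

fun wf_layers :: "nat \<Rightarrow> layer list \<Rightarrow> real list \<Rightarrow> bool" where
  "wf_layers n [] w = (length w = n)"
| "wf_layers n ((W, b) # Ls) w =
     (length b = length W \<and> (\<forall>row\<in>set W. length row = n) \<and> wf_layers (length W) Ls w)"

definition is_net :: "nat \<Rightarrow> nat \<Rightarrow> nat \<Rightarrow> net \<Rightarrow> bool" where
  "is_net d L \<omega> phi =
     (case phi of (Ls, w, c) \<Rightarrow>
        wf_layers (2 * d) Ls w \<and> length Ls + 1 = L \<and>
        (\<forall>l\<in>set Ls. length (fst l) \<le> \<omega>))"

definition sqnorm :: "net \<Rightarrow> real" where
  "sqnorm phi =
     (case phi of (Ls, w, c) \<Rightarrow>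
        (\<Sum>l\<leftarrow>Ls. (\<Sum>row\<leftarrow>fst l. \<Sum>a\<leftarrow>row. a\<^sup>2) + (\<Sum>a\<leftarrow>snd l. a\<^sup>2))
        + (\<Sum>a\<leftarrow>w. a\<^sup>2) + c\<^sup>2)"

text \<open>The input domain X_d = S^(d-1) x S^(d-1), a subset of R^(2d).\<close>
definition Xd :: "nat \<Rightarrow> real list set" where
  "Xd d = {x. length x = 2 * d \<and> (\<Sum>a\<leftarrow>take d x. a\<^sup>2) = 1 \<and> (\<Sum>a\<leftarrow>drop d x. a\<^sup>2) = 1}"

definition realizes :: "nat \<Rightarrow> nat \<Rightarrow> nat \<Rightarrow> net \<Rightarrow> (real list \<Rightarrow> real) \<Rightarrow> bool" where
  "realizes d L \<omega> phi f = (is_net d L \<omega> phi \<and> (\<forall>x\<in>Xd d. eval_net phi x = f x))"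

definition in_N :: "nat \<Rightarrow> nat \<Rightarrow> nat \<Rightarrow> (real list \<Rightarrow> real) \<Rightarrow> bool" where
  "in_N d L \<omega> f = (\<exists>phi. realizes d L \<omega> phi f)"

definition R_cost :: "nat \<Rightarrow> nat \<Rightarrow> nat \<Rightarrow> (real list \<Rightarrow> real) \<Rightarrow> real" where
  "R_cost d L \<omega> f = Inf {sqnorm phi / real L | phi. realizes d L \<omega> phi f}"

end

theory Submission
  imports Defs
begin

text \<open>Since relu a - relu (-a) = a, a first layer with weight matrix [I; -I] and zero bias
stores every input x as the pair of nonnegative parts (relu x, relu (-x)), and the original
first layer (W, b) can read x back through the weights [W, -W]. This costs 2n = 4d for the
new layer and at most doubles the squared norm of the old one, so
||psi||^2 <= 4d + 2 ||phi||^2, and dividing by the depths 3 and 2 gives the bound on R_3.\<close>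

lemma relu_minus_relu_uminus: "relu a - relu (- a) = a"
  by (simp add: relu_def)

definition matrix_sqnorm :: "real list list \<Rightarrow> real" where
  "matrix_sqnorm W = (\<Sum>row\<leftarrow>W. \<Sum>a\<leftarrow>row. a\<^sup>2)"

lemma sqnorm_Cons_layer:
  "sqnorm ((W, b) # Ls, w, c) = matrix_sqnorm W + (\<Sum>a\<leftarrow>b. a\<^sup>2) + sqnorm (Ls, w, c)"
  by (simp add: sqnorm_def matrix_sqnorm_def)

lemma sqnorm_nonneg: "0 \<le> sqnorm phi"
  unfolding sqnorm_def
  by (auto split: prod.splits intro!: sum_list_nonneg add_nonneg_nonneg)

lemma eval_net_Cons_layer: "eval_net (l # Ls, w, c) x = eval_net (Ls, w, c) (apply_layer l x)"
  by (simp add: eval_net_def)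

definition unit_row :: "nat \<Rightarrow> nat \<Rightarrow> real \<Rightarrow> real list" where
  "unit_row n i s = map (\<lambda>j. if j = i then s else 0) [0..<n]"

definition pm_identity :: "nat \<Rightarrow> real list list" where
  "pm_identity n = map (\<lambda>i. unit_row n i 1) [0..<n] @ map (\<lambda>i. unit_row n i (- 1)) [0..<n]"

definition sign_split :: "real list list \<Rightarrow> real list list" where
  "sign_split W = map (\<lambda>row. row @ map uminus row) W"

lemma dot_unit_row:
  assumes "i < n" "length x = n"
  shows "sum_list (map2 (*) (unit_row n i s) x) = s * x ! i"
proof -
  have "sum_list (map2 (*) (unit_row n i s) x) = (\<Sum>j<n. (if j = i then s else 0) * x ! j)"
    using assms by (simp add: unit_row_def sum_list_sum_nth atLeast0LessThan)
  also have "\<dots> = (\<Sum>j<n. if j = i then s * x ! i else 0)"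
    by (rule sum.cong) auto
  finally show ?thesis
    using assms(1) by simp
qed

lemma sqnorm_unit_row:
  assumes "i < n"
  shows "(\<Sum>a\<leftarrow>unit_row n i s. a\<^sup>2) = s\<^sup>2"
proof -
  have "(\<Sum>a\<leftarrow>unit_row n i s. a\<^sup>2) = (\<Sum>j<n. (if j = i then s else 0)\<^sup>2)"
    by (simp add: unit_row_def sum_list_sum_nth atLeast0LessThan)
  also have "\<dots> = (\<Sum>j<n. if j = i then s\<^sup>2 else 0)"
    by (rule sum.cong) auto
  finally show ?thesis
    using assms by simp
qed

lemma matvec_pm_identity:
  assumes "length x = n"
  shows "matvec (pm_identity n) x = x @ map uminus x"
  using assms
  by (intro nth_equalityI) (auto simp: matvec_def pm_identity_def nth_append dot_unit_row)

lemma apply_layer_pm_identity: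
  assumes "length x = n"
  shows "apply_layer (pm_identity n, replicate (2 * n) 0) x =
         map relu x @ map (\<lambda>a. relu (- a)) x"
  using assms
  by (intro nth_equalityI) (auto simp: apply_layer_def matvec_pm_identity nth_append)

lemma dot_sign_split_relu:
  assumes "length r = length x"
  shows "sum_list (map2 (*) (r @ map uminus r) (map relu x @ map (\<lambda>a. relu (- a)) x)) =
         sum_list (map2 (*) r x)"
  using assms
proof (induction r x rule: list_induct2)
  case Nil
  then show ?case by simp
next
  case (Cons s r a x)
  have "s * relu a + - s * relu (- a) = s * a"
    using relu_minus_relu_uminus[of a] by (simp add: algebra_simps flip: right_diff_distrib)
  with Cons show ?case
    by (simp add: zip_append)
qed

lemma matvec_sign_split_relu:
  assumes "\<forall>row\<in>set W. length row = length x"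
  shows "matvec (sign_split W) (map relu x @ map (\<lambda>a. relu (- a)) x) = matvec W x"
  unfolding matvec_def sign_split_def map_map comp_def
  by (intro map_cong refl dot_sign_split_relu) (use assms in auto)

lemma matrix_sqnorm_pm_identity: "matrix_sqnorm (pm_identity n) = 2 * real n"
proof -
  have "(\<Sum>i\<leftarrow>[0..<n]. \<Sum>a\<leftarrow>unit_row n i s. a\<^sup>2) = real n * s\<^sup>2" for s
  proof -
    have "(\<Sum>i\<leftarrow>[0..<n]. \<Sum>a\<leftarrow>unit_row n i s. a\<^sup>2) = (\<Sum>i=0..<n. \<Sum>a\<leftarrow>unit_row n i s. a\<^sup>2)"
      by (simp only: interv_sum_list_conv_sum_set_nat set_upt)
    also have "\<dots> = (\<Sum>i=0..<n. s\<^sup>2)"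
      by (rule sum.cong) (simp_all add: sqnorm_unit_row)
    finally show ?thesis
      by simp
  qed
  then show ?thesis
    by (simp add: matrix_sqnorm_def pm_identity_def comp_def)
qed

lemma matrix_sqnorm_sign_split: "matrix_sqnorm (sign_split W) = 2 * matrix_sqnorm W"
  unfolding matrix_sqnorm_def sign_split_def by (induction W) (auto simp: comp_def)

definition deepen :: "nat \<Rightarrow> layer \<Rightarrow> layer list \<Rightarrow> layer list" where
  "deepen n l Ls = (pm_identity n, replicate (2 * n) 0) # (sign_split (fst l), snd l) # Ls"

lemma eval_net_deepen:
  assumes "length x = n" "\<forall>row\<in>set (fst l). length row = n"
  shows "eval_net (deepen n l Ls, w, c) x = eval_net (l # Ls, w, c) x"
proof -
  have "apply_layer (sign_split (fst l), snd l) (apply_layer (pm_identity n, replicate (2 * n) 0) x)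
        = apply_layer l x"
    unfolding apply_layer_pm_identity[OF assms(1)]
    using assms by (simp add: apply_layer_def matvec_sign_split_relu)
  then show ?thesis
    by (simp add: deepen_def eval_net_Cons_layer)
qed

lemma is_net_deepen:
  assumes "is_net d L \<omega> (l # Ls, w, c)"
  shows "is_net d (Suc L) (max \<omega> (4 * d)) (deepen (2 * d) l Ls, w, c)"
proof -
  obtain W b where "l = (W, b)" by fastforce
  then show ?thesis
    using assms
    by (auto simp: is_net_def deepen_def pm_identity_def unit_row_def sign_split_def)
qed

lemma sqnorm_deepen:
  "sqnorm (deepen n l Ls, w, c) \<le> 2 * real n + 2 * sqnorm (l # Ls, w, c)"
proof -
  obtain W b where l: "l = (W, b)" by fastforce
  have "sqnorm (deepen n l Ls, w, c) =
        2 * real n + 2 * matrix_sqnorm W + (\<Sum>a\<leftarrow>b. a\<^sup>2) + sqnorm (Ls, w, c)"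
    by (simp add: l deepen_def sqnorm_Cons_layer matrix_sqnorm_pm_identity
        matrix_sqnorm_sign_split sum_list_replicate)
  moreover have "0 \<le> (\<Sum>a\<leftarrow>b. a\<^sup>2)"
    by (auto intro!: sum_list_nonneg)
  ultimately show ?thesis
    using sqnorm_nonneg[of "(Ls, w, c)"] by (simp add: l sqnorm_Cons_layer)
qed

lemma realizes_deepen:
  assumes "realizes d L \<omega> phi f" "2 \<le> L"
  obtains psi where "realizes d (Suc L) (max \<omega> (4 * d)) psi f"
    and "sqnorm psi \<le> 4 * real d + 2 * sqnorm phi"
proof -
  obtain Ls w c where phi: "phi = (Ls, w, c)"
    by (cases phi) auto
  with assms obtain l Ls' where Ls: "Ls = l # Ls'"
    by (cases Ls) (auto simp: realizes_def is_net_def)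
  have net: "is_net d L \<omega> (l # Ls', w, c)" and ev: "\<forall>x\<in>Xd d. eval_net phi x = f x"
    using assms(1) by (auto simp: realizes_def phi Ls)
  then have "\<forall>row\<in>set (fst l). length row = 2 * d"
    by (cases l) (simp add: is_net_def)
  then have "\<forall>x\<in>Xd d. eval_net (deepen (2 * d) l Ls', w, c) x = f x"
    using ev by (simp add: Xd_def eval_net_deepen phi Ls)
  with is_net_deepen[OF net] have "realizes d (Suc L) (max \<omega> (4 * d)) (deepen (2 * d) l Ls', w, c) f"
    by (simp add: realizes_def)
  moreover have "sqnorm (deepen (2 * d) l Ls', w, c) \<le> 4 * real d + 2 * sqnorm phi"
    using sqnorm_deepen[of "2 * d" l Ls' w c] by (simp add: phi Ls)
  ultimately show thesis
    by (rule that)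
qed

lemma cInf_le_affine_cInf:
  fixes A B :: "real set"
  assumes "B \<noteq> {}" "bdd_below A" "0 < k"
    and "\<And>b. b \<in> B \<Longrightarrow> \<exists>a\<in>A. a \<le> c + k * b"
  shows "Inf A \<le> c + k * Inf B"
proof -
  have "(Inf A - c) / k \<le> b" if b: "b \<in> B" for b
  proof -
    obtain a where "a \<in> A" "a \<le> c + k * b"
      using assms(4)[OF b] by blast
    then have "Inf A \<le> c + k * b"
      using cInf_lower[OF _ assms(2)] by fastforce
    then show ?thesis
      using assms(3) by (simp add: field_simps)
  qed
  then have "(Inf A - c) / k \<le> Inf B"
    using assms(1) by (intro cInf_greatest) auto
  then show ?thesis
    using assms(3) by (simp add: field_simps)
qed

lemma bdd_below_R_cost_set: "bdd_below {sqnorm phi / real L | phi. realizes d L \<omega> phi f}"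
  by (rule bdd_belowI[of _ 0]) (auto intro: divide_nonneg_nonneg sqnorm_nonneg)

theorem lemma5:
  fixes d \<omega> :: nat and f :: "real list \<Rightarrow> real"
  assumes "in_N d 2 \<omega> f"
  shows "in_N d 3 (max \<omega> (4 * d)) f \<and>
         R_cost d 3 (max \<omega> (4 * d)) f \<le> 4 * real d / 3 + 4 / 3 * R_cost d 2 \<omega> f"
proof -
  let ?S2 = "{sqnorm phi / real 2 | phi. realizes d 2 \<omega> phi f}"
  let ?S3 = "{sqnorm psi / real 3 | psi. realizes d 3 (max \<omega> (4 * d)) psi f}"
  have deepened: "\<exists>a\<in>?S3. a \<le> 4 * real d / 3 + 4 / 3 * s" if s: "s \<in> ?S2" for s
  proof -
    obtain phi where phi: "realizes d 2 \<omega> phi f" and s_eq: "s = sqnorm phi / real 2"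
      using s by blast
    obtain psi where psi: "realizes d 3 (max \<omega> (4 * d)) psi f"
      and "sqnorm psi \<le> 4 * real d + 2 * sqnorm phi"
      by (rule realizes_deepen[OF phi]) (simp_all add: numeral_3_eq_3)
    then have "sqnorm psi / real 3 \<le> 4 * real d / 3 + 4 / 3 * s"
      by (simp add: s_eq)
    moreover have "sqnorm psi / real 3 \<in> ?S3"
      using psi by blast
    ultimately show ?thesis
      by blast
  qed
  obtain phi where "realizes d 2 \<omega> phi f"
    using assms unfolding in_N_def by blast
  then have "sqnorm phi / real 2 \<in> ?S2"
    by blast
  then have "?S2 \<noteq> {}" and "?S3 \<noteq> {}"
    using deepened by blast+
  have "R_cost d 3 (max \<omega> (4 * d)) f \<le> 4 * real d / 3 + 4 / 3 * R_cost d 2 \<omega> f"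
    unfolding R_cost_def
    by (rule cInf_le_affine_cInf[OF \<open>?S2 \<noteq> {}\<close> bdd_below_R_cost_set _ deepened]) simp_all
  with \<open>?S3 \<noteq> {}\<close> show ?thesis
    unfolding in_N_def by blast
qed

end
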